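(* For $i=1,2$ let $f_i:H_0\to H_i$ be homomorphisms of free left $\bar k[\sigma]$-modules of finite rank, with $H_0,H_1,H_2$ all of the same rank. Assume $f_1\bmod\sigma$ is bijective and $\ker(f_1\bmod(\sigma-1))\subset\ker(f_2\bmod(\sigma-1))$. Then there is a unique homomorphism of left $\bar k[\sigma]$-modules $g:H_1\to H_2$ with $g\circ f_1=f_2$.
   Context: $\bar k$ is the algebraic closure of $k=\mathbb F_q(T)$. $\bar k[\sigma]$ is the noncommutative polynomial ring in $\sigma$ with $\sigma x=x^{q^{-1}}\sigma$ for $x\in\bar k$. For a homomorphism $f:H\to H'$ of left $\bar k[\sigma]$-modules, $f\bmod\sigma:H/\sigma H\to H'/\sigma H'$ and $f\bmod(\sigma-1):H/(\sigma-1)H\to H'/(\sigma-1)H'$ are the induced maps. *)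

theory Defs
  imports "HOL-Algebra.Algebraic_Closure_Type" "HOL-Computational_Algebra.Fraction_Field"
begin

text \<open>kbar = algebraic closure of F_q(T), where F_q is a finite field type 'f
  (q = CARD('f)) and F_q(T) is the fraction field of 'f poly.\<close>
type_synonym 'f kbar = "'f poly fract alg_closure"

text \<open>The inverse Frobenius x |-> x^(1/q) (unique q-th root in a perfect field).\<close>
definition qroot :: "nat \<Rightarrow> 'a::field \<Rightarrow> 'a" where
  "qroot q x = (THE y. y ^ q = x)"

text \<open>Elements of kbar[sigma] are stored as polynomials: p stands for
  sum_i (coeff p i) sigma^i.  Addition is the usual one; multiplication is
  twisted by sigma x = x^(1/q) sigma, i.e.
  (a sigma^i)(b sigma^j) = a b^(q^-i) sigma^(i+j).\<close>
definition skew_mult :: "nat \<Rightarrow> 'a::field poly \<Rightarrow> 'a poly \<Rightarrow> 'a poly" where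
  "skew_mult q p r =
     (\<Sum>i\<le>degree p. \<Sum>j\<le>degree r. monom (coeff p i * (qroot q ^^ i) (coeff r j)) (i + j))"

definition sigma :: "'a::field poly" where
  "sigma = monom 1 1"

text \<open>The free left kbar[sigma]-module of rank n: vectors indexed by {..<n}.\<close>
definition Vn :: "nat \<Rightarrow> (nat \<Rightarrow> 'a::field poly) set" where
  "Vn n = {v. \<forall>i\<ge>n. v i = 0}"

definition vadd :: "(nat \<Rightarrow> 'a::field poly) \<Rightarrow> (nat \<Rightarrow> 'a poly) \<Rightarrow> nat \<Rightarrow> 'a poly" where
  "vadd v w = (\<lambda>i. v i + w i)"

definition vdiff :: "(nat \<Rightarrow> 'a::field poly) \<Rightarrow> (nat \<Rightarrow> 'a poly) \<Rightarrow> nat \<Rightarrow> 'a poly" where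
  "vdiff v w = (\<lambda>i. v i - w i)"

definition vsmult :: "nat \<Rightarrow> 'a::field poly \<Rightarrow> (nat \<Rightarrow> 'a poly) \<Rightarrow> nat \<Rightarrow> 'a poly" where
  "vsmult q r v = (\<lambda>i. skew_mult q r (v i))"

definition skew_hom :: "nat \<Rightarrow> nat \<Rightarrow> nat \<Rightarrow> ((nat \<Rightarrow> 'a::field poly) \<Rightarrow> (nat \<Rightarrow> 'a poly)) \<Rightarrow> bool" where
  "skew_hom q n m f \<longleftrightarrow>
     (\<forall>x\<in>Vn n. f x \<in> Vn m) \<and>
     (\<forall>x\<in>Vn n. \<forall>y\<in>Vn n. f (vadd x y) = vadd (f x) (f y)) \<and>
     (\<forall>r. \<forall>x\<in>Vn n. f (vsmult q r x) = vsmult q r (f x))"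

definition submod :: "nat \<Rightarrow> nat \<Rightarrow> 'a::field poly \<Rightarrow> (nat \<Rightarrow> 'a poly) set" where
  "submod q n P = vsmult q P ` Vn n"

text \<open>f mod P : H/PH -> H'/PH' is bijective (unfolded on representatives).\<close>
definition mod_bij :: "nat \<Rightarrow> nat \<Rightarrow> nat \<Rightarrow> 'a::field poly \<Rightarrow> ((nat \<Rightarrow> 'a poly) \<Rightarrow> (nat \<Rightarrow> 'a poly)) \<Rightarrow> bool" where
  "mod_bij q n m P f \<longleftrightarrow>
     (\<forall>x\<in>Vn n. \<forall>y\<in>Vn n. vdiff (f x) (f y) \<in> submod q m P \<longrightarrow> vdiff x y \<in> submod q n P) \<and>
     (\<forall>z\<in>Vn m. \<exists>x\<in>Vn n. vdiff z (f x) \<in> submod q m P)"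

text \<open>ker(f1 mod P) \<subseteq> ker(f2 mod P) (unfolded on representatives).\<close>
definition mod_ker_sub :: "nat \<Rightarrow> nat \<Rightarrow> nat \<Rightarrow> nat \<Rightarrow> 'a::field poly \<Rightarrow>
    ((nat \<Rightarrow> 'a poly) \<Rightarrow> (nat \<Rightarrow> 'a poly)) \<Rightarrow> ((nat \<Rightarrow> 'a poly) \<Rightarrow> (nat \<Rightarrow> 'a poly)) \<Rightarrow> bool" where
  "mod_ker_sub q n m1 m2 P f1 f2 \<longleftrightarrow>
     (\<forall>x\<in>Vn n. f1 x \<in> submod q m1 P \<longrightarrow> f2 x \<in> submod q m2 P)"

end

theory Submission
  imports Defs
begin

text \<open>
  Write R for the skew polynomial ring, where sigma c = c^(1/q) sigma. It has division with
  remainder on both sides, and reduction modulo (sigma - 1)R is the additive map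
  eval1 r = sum_i r_i^(q^i) onto the field; moreover eval1 (r s) = P_s (eval1 r) for the additive
  polynomial P_s = sum_i s_i^(q^i) X^(q^i), which is separable of degree q^(deg s) when s_0 is
  nonzero. Counting the roots of P_a shows that such an a left-divides z as soon as
  c a in (sigma - 1)R implies c z in (sigma - 1)R: this is the theorem in rank one.

  Existence of g is proved for an arbitrary submodule M mapped into R^n, by induction on n. The
  last coordinates of f(M) form a left ideal R a, and a_0 is nonzero because f mod sigma is onto.
  On the kernel of the last coordinate the induction hypothesis gives g' (and that f mod
  (sigma - 1) is onto), and g' extends to R^(n+1) by sending the last basis vector to some w with
  a w = h u - g' (f u), where u in M has last coordinate a; such a w exists by the rank-one case.
  For uniqueness, the difference of two solutions maps R^n into sigma times its own image, so it
  vanishes.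
\<close>

section \<open>Polynomials over an algebraically closed field\<close>

lemma poly_surjective:
  fixes p :: "'a::alg_closed_field poly"
  assumes "degree p > 0"
  shows "\<exists>x. poly p x = t"
proof -
  have "degree (p + [:-t:]) = degree p"
    using assms by (intro degree_add_eq_left) simp
  then obtain x where "poly (p + [:-t:]) x = 0"
    using assms alg_closed_imp_poly_has_root[of "p + [:-t:]"] by auto
  then show ?thesis by auto
qed

lemma card_roots_separable:
  fixes p :: "'a::alg_closed_field poly"
  assumes "p \<noteq> 0" and separable: "\<And>x. poly p x = 0 \<Longrightarrow> poly (pderiv p) x \<noteq> 0"
  shows "card {x. poly p x = 0} = degree p"
proof -
  obtain A where A: "size A = degree p" "p = smult (lead_coeff p) (\<Prod>x\<in>#A. [:-x, 1:])"
    using alg_closed_imp_factorization[OF assms(1)] by blast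
  have roots: "{x. poly p x = 0} = set_mset A"
    using assms(1) by (subst A(2)) (auto simp: poly_prod_mset prod_mset_zero_iff)
  have simple: "count A x \<le> 1" for x
  proof (rule ccontr)
    assume "\<not> count A x \<le> 1"
    then have A_split: "A = add_mset x (add_mset x (A - {#x, x#}))"
      by (intro multiset_eqI) auto
    define a where "a = [:-x, 1:]"
    define Q where "Q = smult (lead_coeff p) (\<Prod>y\<in>#A - {#x, x#}. [:-y, 1:])"
    have p: "p = a * (a * Q)"
      by (subst A(2), subst A_split) (simp add: a_def Q_def mult_ac)
    have "poly a x = 0"
      by (simp add: a_def)
    then have "poly p x = 0" and "poly (pderiv p) x = 0"
      by (simp_all add: p pderiv_mult)
    with separable show False by blast
  qed
  have "A = mset_set (set_mset A)"
  proof (rule multiset_eqI)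
    fix x
    show "count A x = count (mset_set (set_mset A)) x"
      using simple[of x] by (cases "x \<in># A") (auto simp: count_eq_zero_iff le_Suc_eq)
  qed
  then show ?thesis
    using A(1) roots by (metis size_mset_set)
qed

lemma eq_or_degree_diff_less:
  fixes p z :: "'a::ab_group_add poly"
  assumes "degree p = degree z" "lead_coeff p = lead_coeff z"
  shows "z = p \<or> degree (z - p) < degree z"
proof (cases "z = p")
  case False
  have "degree (z - p) \<le> degree z"
    using assms(1) by (simp add: degree_diff_le)
  moreover have "coeff (z - p) (degree z) = 0"
    using assms by simp
  ultimately show ?thesis
    using False by (metis le_neq_implies_less leading_coeff_0_iff right_minus_eq)
qed simp

lemma division_by_elimination:
  fixes D :: "'a::ab_group_add poly \<Rightarrow> 'a poly"
  assumes D_add: "\<And>v w. D (v + w) = D v + D w"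
    and eliminate:
      "\<And>z. z \<noteq> 0 \<Longrightarrow> degree a \<le> degree z \<Longrightarrow> \<exists>t. z = D t \<or> degree (z - D t) < degree z"
  shows "\<exists>w s. z = D w + s \<and> (s = 0 \<or> degree s < degree a)"
proof (induction "degree z" arbitrary: z rule: less_induct)
  case less
  have D_0: "D 0 = 0"
    using D_add[of 0 0] by simp
  show ?case
  proof (cases "z = 0 \<or> degree z < degree a")
    case True
    then show ?thesis by (intro exI[of _ 0] exI[of _ z]) (auto simp: D_0)
  next
    case False
    then obtain t where "z = D t \<or> degree (z - D t) < degree z"
      using eliminate by force
    then show ?thesis
    proof
      assume "degree (z - D t) < degree z"
      then obtain w s where "z - D t = D w + s" "s = 0 \<or> degree s < degree a"
        using less by blast
      then have "z = D (t + w) + s \<and> (s = 0 \<or> degree s < degree a)"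
        by (simp add: D_add algebra_simps)
      then show ?thesis by blast
    qed (intro exI[of _ t] exI[of _ 0], simp)
  qed
qed

section \<open>The skew polynomial ring\<close>

(* The parameter ty only fixes the field 'a; q is a power of its characteristic, so that
   x \<mapsto> x ^ q is an automorphism of 'a and qroot q is its inverse. *)
locale frobenius_skew_ring =
  fixes ty :: "'a::alg_closed_field itself" and q :: nat
  assumes char_pos: "CHAR('a) > 0"
    and q_char_power: "\<exists>k>0. q = CHAR('a) ^ k"
begin

abbreviation qr :: "'a \<Rightarrow> 'a" where "qr \<equiv> qroot q"

abbreviation skew_times :: "'a poly \<Rightarrow> 'a poly \<Rightarrow> 'a poly" (infixl "\<star>" 70)
  where "p \<star> r \<equiv> skew_mult q p r"

lemma char_prime: "prime CHAR('a)"
  using char_pos by (rule prime_CHAR_semidom)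

lemma q_gt_1: "q > 1"
proof -
  obtain k where "k > 0" "q = CHAR('a) ^ k"
    using q_char_power by blast
  moreover have "CHAR('a) > 1"
    using char_prime prime_gt_1_nat by blast
  ultimately show ?thesis
    using one_less_power[of "CHAR('a)" k] by simp
qed

lemma q_pos [simp]: "q > 0"
  using q_gt_1 by simp

lemma of_nat_q_eq_0 [simp]: "of_nat q = (0::'a)"
proof -
  obtain k where "k > 0" "q = CHAR('a) ^ k"
    using q_char_power by blast
  then show ?thesis by (simp add: of_nat_power zero_power)
qed

lemma power_q_power_add: "(x + y :: 'a) ^ (q ^ i) = x ^ (q ^ i) + y ^ (q ^ i)"
proof -
  obtain k where "q = CHAR('a) ^ k"
    using q_char_power by blast
  then have "q ^ i = CHAR('a) ^ (k * i)"
    by (simp add: power_mult)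
  then show ?thesis
    by (rule freshmans_dream'[OF char_prime])
qed

lemma power_q_power_minus: "(- x :: 'a) ^ (q ^ i) = - (x ^ (q ^ i))"
proof -
  have "x ^ (q ^ i) + (- x) ^ (q ^ i) = 0"
    using power_q_power_add[of x "- x" i] by (simp add: zero_power)
  then show ?thesis by (simp add: eq_neg_iff_add_eq_0 add.commute)
qed

lemma power_q_power_diff: "(x - y :: 'a) ^ (q ^ i) = x ^ (q ^ i) - y ^ (q ^ i)"
  using power_q_power_add[of x "- y" i] by (simp add: power_q_power_minus)

lemma power_q_power_inj: "(x :: 'a) ^ (q ^ i) = y ^ (q ^ i) \<Longrightarrow> x = y"
  using power_q_power_diff[of x y i] by simp

lemma qroot_power [simp]: "qr x ^ q = x"
proof -
  have "\<exists>!y. y ^ q = x"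
    using nth_root_exists[of q x] power_q_power_inj[of _ 1] by (auto intro: ex_ex1I)
  then show ?thesis
    unfolding qroot_def by (rule theI')
qed

lemma qroot_iter_power [simp]: "(qr ^^ i) x ^ (q ^ i) = x"
proof (induction i arbitrary: x)
  case (Suc i)
  have "(qr ^^ Suc i) x ^ (q ^ Suc i) = ((qr ^^ i) (qr x) ^ (q ^ i)) ^ q"
    by (simp only: funpow_Suc_right o_apply power_Suc2 power_mult)
  then show ?case by (simp add: Suc)
qed simp

lemma qroot_iter_eqI: "y ^ (q ^ i) = x \<Longrightarrow> (qr ^^ i) x = y"
  by (rule power_q_power_inj[of _ i]) simp

lemma qroot_iter_of_power [simp]: "(qr ^^ i) (x ^ (q ^ i)) = x"
  by (rule qroot_iter_eqI) simp

lemma qroot_iter_add [simp]: "(qr ^^ i) (x + y) = (qr ^^ i) x + (qr ^^ i) y"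
  by (rule qroot_iter_eqI) (simp add: power_q_power_add)

lemma qroot_iter_mult [simp]: "(qr ^^ i) (x * y) = (qr ^^ i) x * (qr ^^ i) y"
  by (rule qroot_iter_eqI) (simp add: power_mult_distrib)

lemma qroot_iter_0 [simp]: "(qr ^^ i) 0 = 0"
  by (rule qroot_iter_eqI) (simp add: zero_power)

lemma qroot_iter_diff [simp]: "(qr ^^ i) (x - y) = (qr ^^ i) x - (qr ^^ i) y"
  by (rule qroot_iter_eqI) (simp add: power_q_power_diff)

lemma qroot_iter_eq_0_iff [simp]: "(qr ^^ i) x = 0 \<longleftrightarrow> x = 0"
  by (metis qroot_iter_0 qroot_iter_power)

lemma qroot_0 [simp]: "qr 0 = 0"
  using qroot_iter_0[of 1] by simp

lemma qroot_of_power [simp]: "qr (x ^ q) = x"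
  using qroot_iter_of_power[of 1] by simp

lemma qroot_iter_sum: "(qr ^^ i) (\<Sum>j\<in>A. f j) = (\<Sum>j\<in>A. (qr ^^ i) (f j))"
  by (induction A rule: infinite_finite_induct) simp_all

lemma coeff_skew_mult:
  "coeff (p \<star> r) k = (\<Sum>i\<le>k. coeff p i * (qr ^^ i) (coeff r (k - i)))"
proof -
  define N where "N = degree p + degree r + k"
  define F where
    "F i j = (if i \<le> k \<and> j = k - i then coeff p i * (qr ^^ i) (coeff r j) else 0)" for i j
  have "coeff (p \<star> r) k = (\<Sum>i\<le>degree p. \<Sum>j\<le>degree r. F i j)"
    unfolding skew_mult_def coeff_sum coeff_monom F_def
    by (intro sum.cong refl) auto
  also have "\<dots> = (\<Sum>i\<le>N. \<Sum>j\<le>degree r. F i j)"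
    by (intro sum.mono_neutral_left ballI sum.neutral) (auto simp: N_def F_def coeff_eq_0)
  also have "\<dots> = (\<Sum>i\<le>N. \<Sum>j\<le>N. F i j)"
    by (intro sum.cong refl sum.mono_neutral_left) (auto simp: N_def F_def coeff_eq_0)
  also have "\<dots> = (\<Sum>i\<le>N. if i \<le> k then coeff p i * (qr ^^ i) (coeff r (k - i)) else 0)"
    by (intro sum.cong refl) (auto simp: F_def N_def if_distrib cong: if_cong)
  also have "\<dots> = (\<Sum>i\<le>k. coeff p i * (qr ^^ i) (coeff r (k - i)))"
    by (subst sum.inter_filter[symmetric]) (auto intro!: sum.cong simp: N_def)
  finally show ?thesis .
qed

lemma skew_mult_add_left: "(p + p') \<star> r = p \<star> r + p' \<star> r"
  by (rule poly_eqI) (simp add: coeff_skew_mult sum.distrib distrib_right)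

lemma skew_mult_add_right: "p \<star> (r + r') = p \<star> r + p \<star> r'"
  by (rule poly_eqI) (simp add: coeff_skew_mult sum.distrib distrib_left)

lemma skew_mult_0_left [simp]: "0 \<star> r = 0"
  by (rule poly_eqI) (simp add: coeff_skew_mult)

lemma skew_mult_0_right [simp]: "p \<star> 0 = 0"
  by (rule poly_eqI) (simp add: coeff_skew_mult)

lemma skew_mult_minus_left: "(- p) \<star> r = - (p \<star> r)"
  by (rule poly_eqI) (simp add: coeff_skew_mult sum_negf)

lemma skew_mult_diff_left: "(p - p') \<star> r = p \<star> r - p' \<star> r"
  by (rule poly_eqI) (simp add: coeff_skew_mult sum_subtractf left_diff_distrib)

lemma skew_mult_diff_right: "p \<star> (r - r') = p \<star> r - p \<star> r'"
  by (rule poly_eqI) (simp add: coeff_skew_mult sum_subtractf right_diff_distrib)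

lemma skew_mult_sum_right: "p \<star> (\<Sum>i\<in>A. f i) = (\<Sum>i\<in>A. p \<star> f i)"
  by (induction A rule: infinite_finite_induct) (simp_all add: skew_mult_add_right)

lemma coeff_monom_skew_mult:
  "coeff (monom c m \<star> r) k = (if m \<le> k then c * (qr ^^ m) (coeff r (k - m)) else 0)"
proof -
  have "coeff (monom c m \<star> r) k =
      (\<Sum>i\<le>k. if i = m then c * (qr ^^ m) (coeff r (k - m)) else 0)"
    unfolding coeff_skew_mult by (rule sum.cong) (auto simp: coeff_monom)
  then show ?thesis by simp
qed

lemma const_skew_mult: "[:c:] \<star> r = smult c r"
  by (rule poly_eqI) (simp add: coeff_monom_skew_mult flip: monom_0)

lemma one_skew_mult [simp]: "1 \<star> r = r"
  using const_skew_mult[of 1 r] by (simp add: one_pCons)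

lemma coeff_sigma_skew_mult:
  "coeff (sigma \<star> r) k = (if k = 0 then 0 else qr (coeff r (k - 1)))"
  unfolding sigma_def coeff_monom_skew_mult by auto

lemma smult_skew_mult: "smult c (p \<star> r) = smult c p \<star> r"
  by (rule poly_eqI) (simp add: coeff_skew_mult sum_distrib_left mult.assoc)

lemma coeff_skew_mult_0: "coeff (p \<star> r) 0 = coeff p 0 * coeff r 0"
  by (simp add: coeff_skew_mult)

lemma skew_mult_assoc: "p \<star> r \<star> s = p \<star> (r \<star> s)"
proof (rule poly_eqI)
  fix k
  define G where
    "G a b = coeff p a * (qr ^^ a) (coeff r b) * (qr ^^ (a + b)) (coeff s (k - (a + b)))" for a b
  have "coeff (p \<star> r \<star> s) k = (\<Sum>i\<le>k. \<Sum>a\<le>i. G a (i - a))"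
    unfolding coeff_skew_mult sum_distrib_right G_def by (intro sum.cong refl) auto
  also have "\<dots> = (\<Sum>(a, b)\<in>{(a, b). a + b \<le> k}. G a b)"
    by (rule sum.triangle_reindex_eq[symmetric])
  also have "{(a, b). a + b \<le> k} = Sigma {..k} (\<lambda>a. {..k - a})"
    by auto
  also have "(\<Sum>(a, b)\<in>Sigma {..k} (\<lambda>a. {..k - a}). G a b) = (\<Sum>a\<le>k. \<Sum>b\<le>k - a. G a b)"
    by (rule sum.Sigma[symmetric]) auto
  also have "\<dots> = coeff (p \<star> (r \<star> s)) k"
    unfolding coeff_skew_mult qroot_iter_sum sum_distrib_left G_def
    by (intro sum.cong refl) (simp add: funpow_add mult.assoc diff_diff_left)
  finally show "coeff (p \<star> r \<star> s) k = coeff (p \<star> (r \<star> s)) k" .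
qed

lemma coeff_skew_mult_above_degree:
  assumes "k > degree p + degree r"
  shows "coeff (p \<star> r) k = 0"
  unfolding coeff_skew_mult
proof (intro sum.neutral ballI)
  fix i
  show "coeff p i * (qr ^^ i) (coeff r (k - i)) = 0"
  proof (cases "i > degree p")
    case False
    then have "k - i > degree r" using assms by linarith
    then show ?thesis by (simp add: coeff_eq_0)
  qed (simp add: coeff_eq_0)
qed

lemma coeff_skew_mult_degree:
  "coeff (p \<star> r) (degree p + degree r) = lead_coeff p * (qr ^^ degree p) (lead_coeff r)"
proof -
  let ?N = "degree p + degree r"
  have zero: "coeff p i * (qr ^^ i) (coeff r (?N - i)) = 0" if "i \<noteq> degree p" for i
  proof (cases "i > degree p")
    case False
    then have "?N - i > degree r" using that by linarith
    then show ?thesis by (simp add: coeff_eq_0)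
  qed (simp add: coeff_eq_0)
  have "(\<Sum>i\<in>{..?N} - {degree p}. coeff p i * (qr ^^ i) (coeff r (?N - i))) = 0"
    by (intro sum.neutral ballI zero) auto
  then have "coeff (p \<star> r) ?N = lead_coeff p * (qr ^^ degree p) (coeff r (?N - degree p))"
    unfolding coeff_skew_mult by (subst sum.remove[of _ "degree p"]) auto
  then show ?thesis by simp
qed

lemma degree_skew_mult:
  assumes "p \<noteq> 0" "r \<noteq> 0"
  shows "degree (p \<star> r) = degree p + degree r"
proof (rule antisym)
  show "degree (p \<star> r) \<le> degree p + degree r"
    by (rule degree_le) (auto intro: coeff_skew_mult_above_degree)
  show "degree p + degree r \<le> degree (p \<star> r)"
    by (rule le_degree) (use assms in \<open>simp add: coeff_skew_mult_degree\<close>)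
qed

lemma skew_mult_eq_0_iff [simp]: "p \<star> r = 0 \<longleftrightarrow> p = 0 \<or> r = 0"
  using coeff_skew_mult_degree[of p r] by auto

lemma left_division:
  assumes "a \<noteq> 0"
  shows "\<exists>w s. z = a \<star> w + s \<and> (s = 0 \<or> degree s < degree a)"
proof (rule division_by_elimination)
  fix z :: "'a poly" assume z: "z \<noteq> 0" "degree a \<le> degree z"
  define t where
    "t = monom ((lead_coeff z / lead_coeff a) ^ (q ^ degree a)) (degree z - degree a)"
  have "t \<noteq> 0" "degree t = degree z - degree a"
    using z assms by (simp_all add: t_def degree_monom_eq)
  then have "degree (a \<star> t) = degree z" "lead_coeff (a \<star> t) = lead_coeff z"
    using z assms coeff_skew_mult_degree[of a t] by (simp_all add: degree_skew_mult t_def)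
  then show "\<exists>t. z = a \<star> t \<or> degree (z - a \<star> t) < degree z"
    using eq_or_degree_diff_less by blast
qed (rule skew_mult_add_right)

lemma right_division:
  assumes "a \<noteq> 0"
  shows "\<exists>w s. z = w \<star> a + s \<and> (s = 0 \<or> degree s < degree a)"
proof (rule division_by_elimination)
  fix z :: "'a poly" assume z: "z \<noteq> 0" "degree a \<le> degree z"
  define d where "d = degree z - degree a"
  define t where "t = monom (lead_coeff z / (qr ^^ d) (lead_coeff a)) d"
  have "t \<noteq> 0" "degree t = d"
    using z assms by (simp_all add: t_def degree_monom_eq)
  then have "degree (t \<star> a) = degree z" "lead_coeff (t \<star> a) = lead_coeff z"
    using z assms coeff_skew_mult_degree[of t a] by (simp_all add: degree_skew_mult t_def d_def)
  then show "\<exists>t. z = t \<star> a \<or> degree (z - t \<star> a) < degree z"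
    using eq_or_degree_diff_less by blast
qed (rule skew_mult_add_left)

section \<open>Reduction modulo sigma - 1\<close>

(* Since sigma c = c^(1/q) sigma, the monomial c sigma^i is congruent to the constant c^(q^i)
   modulo (sigma - 1)R (monom_congruent_const), so eval1 identifies R/(sigma - 1)R with 'a. *)
definition eval1 :: "'a poly \<Rightarrow> 'a" where
  "eval1 r = (\<Sum>i\<le>degree r. coeff r i ^ (q ^ i))"

definition qpoly :: "'a poly \<Rightarrow> 'a poly" where
  "qpoly r = (\<Sum>i\<le>degree r. monom (coeff r i ^ (q ^ i)) (q ^ i))"

lemma eval1_altdef:
  assumes "degree r \<le> N"
  shows "eval1 r = (\<Sum>i\<le>N. coeff r i ^ (q ^ i))"
  unfolding eval1_def using assms
  by (intro sum.mono_neutral_left) (auto simp: coeff_eq_0 zero_power)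

lemma eval1_add: "eval1 (r + s) = eval1 r + eval1 s"
proof -
  define N where "N = max (degree r) (degree s)"
  have "eval1 (r + s) = (\<Sum>i\<le>N. coeff (r + s) i ^ (q ^ i))"
    by (rule eval1_altdef) (simp add: N_def degree_add_le)
  also have "\<dots> = (\<Sum>i\<le>N. coeff r i ^ (q ^ i)) + (\<Sum>i\<le>N. coeff s i ^ (q ^ i))"
    by (simp add: power_q_power_add sum.distrib)
  also have "\<dots> = eval1 r + eval1 s"
    using eval1_altdef[of r N] eval1_altdef[of s N] by (simp add: N_def)
  finally show ?thesis .
qed

lemma eval1_diff: "eval1 (r - s) = eval1 r - eval1 s"
  using eval1_add[of "r - s" s] by simp

lemma eval1_const [simp]: "eval1 [:c:] = c"
  by (simp add: eval1_def)

lemma eval1_0 [simp]: "eval1 0 = 0"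
  using eval1_const[of 0] by simp

lemma eval1_minus [simp]: "eval1 (- r) = - eval1 r"
  using eval1_diff[of 0 r] by simp

lemma eval1_smult: "eval1 (smult c r) = poly (qpoly r) c"
proof -
  have "eval1 (smult c r) = (\<Sum>i\<le>degree r. coeff (smult c r) i ^ (q ^ i))"
    by (rule eval1_altdef) (simp add: degree_smult_le)
  then show ?thesis
    by (simp add: qpoly_def poly_sum poly_monom power_mult_distrib mult.commute)
qed

lemma eval1_sigma_skew_mult [simp]: "eval1 (sigma \<star> w) = eval1 w"
proof -
  have "degree (sigma \<star> w) \<le> Suc (degree w)"
    by (rule degree_le) (auto simp: coeff_sigma_skew_mult coeff_eq_0)
  then have "eval1 (sigma \<star> w) = (\<Sum>k\<le>Suc (degree w). coeff (sigma \<star> w) k ^ (q ^ k))"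
    by (rule eval1_altdef)
  also have "\<dots> = (\<Sum>k\<le>degree w. coeff (sigma \<star> w) (Suc k) ^ (q ^ Suc k))"
    by (subst sum.atMost_Suc_shift) (simp add: coeff_sigma_skew_mult zero_power)
  also have "\<dots> = eval1 w"
    by (simp add: eval1_def coeff_sigma_skew_mult power_mult)
  finally show ?thesis .
qed

lemma eval1_sigma1_skew_mult [simp]: "eval1 ((sigma - 1) \<star> w) = 0"
  by (simp add: skew_mult_diff_left eval1_diff)

lemma monom_congruent_const: "\<exists>w. monom c k = (sigma - 1) \<star> w + [:c ^ (q ^ k):]"
proof (induction k arbitrary: c)
  case 0
  show ?case by (intro exI[of _ 0]) (simp add: monom_0)
next
  case (Suc k)
  obtain w where w: "monom (c ^ q) k = (sigma - 1) \<star> w + [:(c ^ q) ^ (q ^ k):]"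
    using Suc by blast
  have "sigma \<star> monom (c ^ q) k = monom c (Suc k)"
    by (rule poly_eqI) (auto simp: coeff_sigma_skew_mult coeff_monom)
  then have "monom c (Suc k) = (sigma - 1) \<star> monom (c ^ q) k + monom (c ^ q) k"
    by (simp add: skew_mult_diff_left)
  also have "\<dots> = (sigma - 1) \<star> (monom (c ^ q) k + w) + [:c ^ (q ^ Suc k):]"
    by (subst (2) w) (simp add: skew_mult_add_right power_mult)
  finally show ?case by blast
qed

lemma congruent_eval1: "\<exists>w. r = (sigma - 1) \<star> w + [:eval1 r:]"
proof -
  have "\<forall>i. \<exists>w. monom (coeff r i) i = (sigma - 1) \<star> w + [:coeff r i ^ (q ^ i):]"
    using monom_congruent_const by blast
  then obtain W
    where W: "\<And>i. monom (coeff r i) i = (sigma - 1) \<star> W i + [:coeff r i ^ (q ^ i):]"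
    by metis
  have "r = (\<Sum>i\<le>degree r. monom (coeff r i) i)"
    by (simp add: poly_as_sum_of_monoms)
  also have "\<dots> = (sigma - 1) \<star> (\<Sum>i\<le>degree r. W i) + [:eval1 r:]"
    by (simp add: W sum.distrib skew_mult_sum_right eval1_def sum_to_poly)
  finally show ?thesis by blast
qed

lemma in_sigma1_iff: "(\<exists>w. r = (sigma - 1) \<star> w) \<longleftrightarrow> eval1 r = 0"
  using congruent_eval1[of r] by auto

lemma eval1_skew_mult: "eval1 (r \<star> s) = poly (qpoly s) (eval1 r)"
proof -
  obtain w where w: "r = (sigma - 1) \<star> w + [:eval1 r:]"
    using congruent_eval1 by blast
  have "r \<star> s = (sigma - 1) \<star> (w \<star> s) + smult (eval1 r) s"
    by (subst w) (simp add: skew_mult_add_left skew_mult_assoc const_skew_mult)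
  then show ?thesis by (simp add: eval1_add eval1_smult)
qed

lemma in_sigma_iff: "(\<exists>w. r = sigma \<star> w) \<longleftrightarrow> coeff r 0 = 0"
proof
  assume "coeff r 0 = 0"
  then have "r = sigma \<star> map_poly (\<lambda>x. x ^ q) (poly_shift 1 r)"
    by (intro poly_eqI)
      (auto simp: coeff_sigma_skew_mult coeff_map_poly coeff_poly_shift zero_power)
  then show "\<exists>w. r = sigma \<star> w" by blast
qed (auto simp: coeff_sigma_skew_mult)

lemma coeff_qpoly_q_power: "coeff (qpoly r) (q ^ i) = coeff r i ^ (q ^ i)"
proof -
  have "coeff (qpoly r) (q ^ i) = (\<Sum>j\<le>degree r. if j = i then coeff r i ^ (q ^ i) else 0)"
    unfolding qpoly_def coeff_sum coeff_monom
    using q_gt_1 by (intro sum.cong refl) (auto simp: power_inject_exp)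
  then show ?thesis by (auto simp: coeff_eq_0 zero_power)
qed

lemma qpoly_eq_0_iff [simp]: "qpoly r = 0 \<longleftrightarrow> r = 0"
proof
  assume "qpoly r = 0"
  then have "coeff r i ^ (q ^ i) = 0" for i
    using coeff_qpoly_q_power[of r i] by simp
  then show "r = 0" by (intro poly_eqI) simp
qed (simp add: qpoly_def)

lemma degree_qpoly:
  assumes "r \<noteq> 0"
  shows "degree (qpoly r) = q ^ degree r"
proof (rule antisym)
  have "degree (monom (coeff r i ^ (q ^ i)) (q ^ i)) \<le> q ^ degree r" if "i \<le> degree r" for i
    using that q_gt_1 by (intro order.trans[OF degree_monom_le] power_increasing) auto
  then show "degree (qpoly r) \<le> q ^ degree r"
    unfolding qpoly_def by (intro degree_sum_le) auto
  show "q ^ degree r \<le> degree (qpoly r)"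
    by (rule le_degree) (use assms in \<open>simp add: coeff_qpoly_q_power\<close>)
qed

lemma pderiv_qpoly: "pderiv (qpoly r) = [:coeff r 0:]"
proof -
  have "pderiv (qpoly r) = (\<Sum>i\<le>degree r. pderiv (monom (coeff r i ^ (q ^ i)) (q ^ i)))"
    unfolding qpoly_def using higher_pderiv_sum[of 1] by simp
  also have "\<dots> = (\<Sum>i\<le>degree r. if i = 0 then [:coeff r 0:] else 0)"
    by (intro sum.cong refl) (auto simp: pderiv_monom monom_0 of_nat_power zero_power)
  finally show ?thesis by simp
qed

lemma poly_qpoly_0 [simp]: "poly (qpoly r) 0 = 0"
  by (simp add: qpoly_def poly_sum poly_monom zero_power)

lemma qpoly_surjective: "r \<noteq> 0 \<Longrightarrow> \<exists>c. poly (qpoly r) c = t"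
  by (rule poly_surjective) (simp add: degree_qpoly)

lemma card_roots_qpoly:
  assumes "coeff r 0 \<noteq> 0"
  shows "card {c. poly (qpoly r) c = 0} = q ^ degree r"
proof -
  have "r \<noteq> 0" using assms by auto
  then show ?thesis
    using card_roots_separable[of "qpoly r"] assms by (simp add: pderiv_qpoly degree_qpoly)
qed

lemma eq_0_if_eval1_smult_eq_0:
  assumes "\<And>c. eval1 (smult c r) = 0"
  shows "r = 0"
proof (rule ccontr)
  assume "r \<noteq> 0"
  then obtain c where "poly (qpoly r) c = 1"
    using qpoly_surjective by blast
  with assms[of c] show False by (simp add: eval1_smult)
qed

(* The roots of qpoly a are the c with c a in (sigma - 1)R. There are q^(deg a) of them, and
   they are roots of qpoly s for the remainder s of z by a, which has smaller degree. *)
lemma left_divisible_if_eval1_smult_eq_0: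
  assumes a0: "coeff a 0 \<noteq> 0"
    and vanish: "\<And>c. eval1 (smult c a) = 0 \<Longrightarrow> eval1 (smult c z) = 0"
  shows "\<exists>w. z = a \<star> w"
proof -
  have "a \<noteq> 0" using a0 by auto
  then obtain w s where ws: "z = a \<star> w + s" "s = 0 \<or> degree s < degree a"
    using left_division by blast
  have roots: "{c. poly (qpoly a) c = 0} \<subseteq> {c. poly (qpoly s) c = 0}"
  proof
    fix c assume "c \<in> {c. poly (qpoly a) c = 0}"
    then have ca: "eval1 (smult c a) = 0" by (simp add: eval1_smult)
    have "eval1 (smult c z) = eval1 (smult c a \<star> w) + eval1 (smult c s)"
      by (simp add: ws(1) smult_add_right eval1_add smult_skew_mult)
    then show "c \<in> {c. poly (qpoly s) c = 0}"
      using vanish[OF ca] ca by (simp add: eval1_skew_mult eval1_smult)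
  qed
  show ?thesis
  proof (cases "s = 0")
    case False
    have "q ^ degree a = card {c. poly (qpoly a) c = 0}"
      by (simp add: card_roots_qpoly a0)
    also have "\<dots> \<le> card {c. poly (qpoly s) c = 0}"
      using False by (intro card_mono[OF poly_roots_finite roots]) simp
    also have "\<dots> \<le> q ^ degree s"
      using card_poly_roots_bound[of "qpoly s"] False by (simp add: degree_qpoly)
    finally have "degree a \<le> degree s"
      using q_gt_1 by simp
    with ws(2) False show ?thesis by simp
  qed (use ws in auto)
qed

end

section \<open>Submodules of free modules\<close>

type_synonym 'b vec = "nat \<Rightarrow> 'b poly"

lemma vadd_apply [simp]: "vadd v w i = v i + w i"
  by (simp add: vadd_def)

lemma vdiff_apply [simp]: "vdiff v w i = v i - w i"
  by (simp add: vdiff_def)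

lemma vsmult_apply [simp]: "vsmult q r v i = skew_mult q r (v i)"
  by (simp add: vsmult_def)

lemma mem_Vn_iff: "v \<in> Vn n \<longleftrightarrow> (\<forall>i\<ge>n. v i = 0)"
  by (simp add: Vn_def)

definition trunc_vec :: "nat \<Rightarrow> 'b::zero vec \<Rightarrow> 'b vec" where
  "trunc_vec n v = (\<lambda>i. if i < n then v i else 0)"

lemma trunc_vec_mem_Vn [simp]: "trunc_vec n v \<in> Vn n"
  by (simp add: trunc_vec_def mem_Vn_iff)

lemma trunc_vec_id: "v \<in> Vn n \<Longrightarrow> trunc_vec n v = v"
  by (auto simp: trunc_vec_def mem_Vn_iff)

lemma trunc_vec_vadd: "trunc_vec n (vadd x y) = vadd (trunc_vec n x) (trunc_vec n y)"
  by (auto simp: trunc_vec_def vadd_def)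

context frobenius_skew_ring
begin

lemma trunc_vec_vsmult: "trunc_vec n (vsmult q r x) = vsmult q r (trunc_vec n (x :: 'a vec))"
  by (simp add: trunc_vec_def fun_eq_iff)

definition is_submodule :: "'a vec set \<Rightarrow> bool" where
  "is_submodule M \<longleftrightarrow>
     M \<noteq> {} \<and> (\<forall>x\<in>M. \<forall>y\<in>M. vadd x y \<in> M) \<and> (\<forall>r. \<forall>x\<in>M. vsmult q r x \<in> M)"

definition linear_on :: "'a vec set \<Rightarrow> ('a vec \<Rightarrow> 'a vec) \<Rightarrow> bool" where
  "linear_on M f \<longleftrightarrow>
     (\<forall>x\<in>M. \<forall>y\<in>M. f (vadd x y) = vadd (f x) (f y)) \<and>
     (\<forall>r. \<forall>x\<in>M. f (vsmult q r x) = vsmult q r (f x))"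

definition surj_mod_on :: "'a poly \<Rightarrow> 'a vec set \<Rightarrow> nat \<Rightarrow> ('a vec \<Rightarrow> 'a vec) \<Rightarrow> bool" where
  "surj_mod_on P M n f \<longleftrightarrow> (\<forall>y\<in>Vn n. \<exists>x\<in>M. vdiff y (f x) \<in> submod q n P)"

lemma surj_mod_onD:
  "surj_mod_on P M n f \<Longrightarrow> y \<in> Vn n \<Longrightarrow> \<exists>x\<in>M. vdiff y (f x) \<in> submod q n P"
  by (simp add: surj_mod_on_def)

lemma vdiff_eq_vadd_vsmult: "vdiff x y = vadd x (vsmult q (- 1) (y :: 'a vec))"
  by (simp add: fun_eq_iff skew_mult_minus_left)

lemma vsmult_0: "vsmult q 0 (x :: 'a vec) = (\<lambda>_. 0)"
  by (simp add: fun_eq_iff)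

lemma submodule_add: "is_submodule M \<Longrightarrow> x \<in> M \<Longrightarrow> y \<in> M \<Longrightarrow> vadd x y \<in> M"
  and submodule_smult: "is_submodule M \<Longrightarrow> x \<in> M \<Longrightarrow> vsmult q r x \<in> M"
  unfolding is_submodule_def by blast+

lemma submodule_diff: "is_submodule M \<Longrightarrow> x \<in> M \<Longrightarrow> y \<in> M \<Longrightarrow> vdiff x y \<in> M"
  unfolding vdiff_eq_vadd_vsmult by (intro submodule_add submodule_smult)

lemma submodule_zero:
  assumes "is_submodule M"
  shows "(\<lambda>_. 0) \<in> M"
proof -
  obtain x where "x \<in> M"
    using assms unfolding is_submodule_def by blast
  then show ?thesis
    using submodule_smult[OF assms, of x 0] by (simp add: vsmult_0)
qed

lemma submodule_Vn: "is_submodule (Vn n)"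
  unfolding is_submodule_def by (auto simp: mem_Vn_iff)

lemma linear_on_add: "linear_on M f \<Longrightarrow> x \<in> M \<Longrightarrow> y \<in> M \<Longrightarrow> f (vadd x y) = vadd (f x) (f y)"
  and linear_on_smult: "linear_on M f \<Longrightarrow> x \<in> M \<Longrightarrow> f (vsmult q r x) = vsmult q r (f x)"
  unfolding linear_on_def by blast+

lemma linear_on_diff:
  "linear_on M f \<Longrightarrow> is_submodule M \<Longrightarrow> x \<in> M \<Longrightarrow> y \<in> M \<Longrightarrow> f (vdiff x y) = vdiff (f x) (f y)"
  unfolding vdiff_eq_vadd_vsmult by (simp only: linear_on_add linear_on_smult submodule_smult)

lemma linear_on_zero:
  assumes "linear_on M f" "is_submodule M"
  shows "f (\<lambda>_. 0) = (\<lambda>_. 0)"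
proof -
  have "f (vsmult q 0 (\<lambda>_. 0)) = vsmult q 0 (f (\<lambda>_. 0))"
    using assms by (intro linear_on_smult submodule_zero)
  then show ?thesis by (simp only: vsmult_0)
qed

lemma linear_on_subset: "linear_on M f \<Longrightarrow> N \<subseteq> M \<Longrightarrow> linear_on N f"
  unfolding linear_on_def by blast

lemma linear_on_if_skew_hom: "skew_hom q n m g \<Longrightarrow> linear_on (Vn n) g"
  by (simp add: skew_hom_def linear_on_def)

lemma skew_hom_mem_Vn: "skew_hom q n m g \<Longrightarrow> y \<in> Vn n \<Longrightarrow> g y \<in> Vn m"
  by (simp add: skew_hom_def)

lemma submod_iff_coordinatewise:
  assumes "\<And>r. (\<exists>w. r = P \<star> w) \<longleftrightarrow> C r"
  shows "v \<in> submod q n P \<longleftrightarrow> v \<in> Vn n \<and> (\<forall>j. C (v j))"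
proof
  assume v: "v \<in> submod q n P"
  then have "C (v j)" for j
    using assms[of "v j"] by (auto simp: submod_def)
  with v show "v \<in> Vn n \<and> (\<forall>j. C (v j))"
    by (auto simp: submod_def mem_Vn_iff)
next
  assume v: "v \<in> Vn n \<and> (\<forall>j. C (v j))"
  define w where "w j = (if j < n then (SOME w. v j = P \<star> w) else 0)" for j
  have "v j = P \<star> w j" for j
  proof (cases "j < n")
    case True
    have "\<exists>w. v j = P \<star> w"
      using v assms by blast
    then have "v j = P \<star> (SOME w. v j = P \<star> w)"
      by (rule someI_ex)
    with True show ?thesis by (simp add: w_def)
  qed (use v in \<open>simp add: w_def mem_Vn_iff\<close>)
  moreover have "w \<in> Vn n"
    by (simp add: w_def mem_Vn_iff)
  ultimately show "v \<in> submod q n P"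
    unfolding submod_def by (auto simp: fun_eq_iff)
qed

lemma submod_sigma_iff:
  "(v :: 'a vec) \<in> submod q n sigma \<longleftrightarrow> v \<in> Vn n \<and> (\<forall>j. coeff (v j) 0 = 0)"
  by (rule submod_iff_coordinatewise[where C = "\<lambda>r. coeff r 0 = 0"]) (rule in_sigma_iff)

lemma submod_sigma1_iff:
  "v \<in> submod q n (sigma - 1) \<longleftrightarrow> v \<in> Vn n \<and> (\<forall>j. eval1 (v j) = 0)"
  by (rule submod_iff_coordinatewise[where C = "\<lambda>r. eval1 r = 0"]) (rule in_sigma1_iff)

lemma skew_hom_submod:
  assumes "skew_hom q n m g" "v \<in> submod q n P"
  shows "g v \<in> submod q m P"
proof -
  obtain w where "w \<in> Vn n" "v = vsmult q P w"
    using assms(2) by (auto simp: submod_def)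
  with assms(1) show ?thesis
    by (auto simp: submod_def skew_hom_def)
qed

lemma left_ideal_principal:
  assumes diff: "\<And>x y. x \<in> I \<Longrightarrow> y \<in> I \<Longrightarrow> x - y \<in> I"
    and mult: "\<And>r x. x \<in> I \<Longrightarrow> r \<star> x \<in> I"
    and nonzero: "b \<in> I" "b \<noteq> 0"
  obtains a where "a \<in> I" "a \<noteq> 0" "\<And>x. x \<in> I \<Longrightarrow> \<exists>r. x = r \<star> a"
proof -
  obtain a where a: "a \<in> I \<and> a \<noteq> 0"
    and minimal: "\<And>x. x \<in> I \<and> x \<noteq> 0 \<Longrightarrow> degree a \<le> degree x"
    using ex_has_least_nat[of "\<lambda>x. x \<in> I \<and> x \<noteq> 0" b degree] nonzero by blast
  have "\<exists>r. x = r \<star> a" if x: "x \<in> I" for x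
  proof -
    obtain r s where rs: "x = r \<star> a + s" "s = 0 \<or> degree s < degree a"
      using right_division a by blast
    have "x - r \<star> a \<in> I"
      using diff x mult a by blast
    then have "s \<in> I"
      using rs(1) by (simp add: algebra_simps)
    then have "s = 0"
      using minimal[of s] rs(2) by fastforce
    with rs(1) show ?thesis by auto
  qed
  with a that show ?thesis by blast
qed

definition unit_vec :: "nat \<Rightarrow> 'a vec" where
  "unit_vec n = (\<lambda>j. if j = n then 1 else 0)"

lemma last_coordinate_generator:
  assumes M: "is_submodule M" and f: "linear_on M f"
    and surj: "surj_mod_on sigma M (Suc n) f"
  obtains u where "u \<in> M" "coeff (f u n) 0 \<noteq> 0" "\<And>x. x \<in> M \<Longrightarrow> \<exists>r. f x n = r \<star> f u n"
proof -
  define I where "I = (\<lambda>x. f x n) ` M"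
  have "unit_vec n \<in> Vn (Suc n)"
    by (simp add: unit_vec_def mem_Vn_iff)
  then obtain x1 where x1: "x1 \<in> M" "vdiff (unit_vec n) (f x1) \<in> submod q (Suc n) sigma"
    using surj_mod_onD[OF surj] by blast
  then have x1_coeff: "coeff (f x1 n) 0 = 1"
    unfolding submod_sigma_iff by (auto simp: unit_vec_def dest!: spec[of _ n])
  have I_diff: "x - y \<in> I" if xy: "x \<in> I" "y \<in> I" for x y
  proof -
    obtain x' y' where "x' \<in> M" "y' \<in> M" "x = f x' n" "y = f y' n"
      using xy by (auto simp: I_def)
    then have "vdiff x' y' \<in> M" "x - y = f (vdiff x' y') n"
      by (simp_all add: submodule_diff[OF M] linear_on_diff[OF f M])
    then show ?thesis by (auto simp: I_def)
  qed
  have I_mult: "r \<star> x \<in> I" if x: "x \<in> I" for r x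
  proof -
    obtain x' where "x' \<in> M" "x = f x' n"
      using x by (auto simp: I_def)
    then have "vsmult q r x' \<in> M" "r \<star> x = f (vsmult q r x') n"
      by (simp_all add: submodule_smult[OF M] linear_on_smult[OF f])
    then show ?thesis by (auto simp: I_def)
  qed
  have "f x1 n \<in> I" "f x1 n \<noteq> 0"
    using x1 x1_coeff by (auto simp: I_def)
  then obtain a where a: "a \<in> I" "a \<noteq> 0" and gen: "\<And>x. x \<in> I \<Longrightarrow> \<exists>r. x = r \<star> a"
    using left_ideal_principal[OF I_diff I_mult] by blast
  obtain u where u: "u \<in> M" "a = f u n"
    using a(1) by (auto simp: I_def)
  obtain r where "f x1 n = r \<star> a"
    using gen x1(1) by (auto simp: I_def)
  then have "coeff r 0 * coeff a 0 = 1"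
    using x1_coeff by (simp add: coeff_skew_mult_0)
  then have "coeff (f u n) 0 \<noteq> 0"
    using u by auto
  moreover have "\<exists>r. f x n = r \<star> f u n" if "x \<in> M" for x
    using gen[of "f x n"] that u by (auto simp: I_def)
  ultimately show ?thesis
    using that u(1) by blast
qed

definition extend_hom :: "nat \<Rightarrow> ('a vec \<Rightarrow> 'a vec) \<Rightarrow> 'a vec \<Rightarrow> 'a vec \<Rightarrow> 'a vec" where
  "extend_hom n g W y = vadd (g (trunc_vec n y)) (\<lambda>j. y n \<star> W j)"

lemma skew_hom_extend_hom:
  assumes g: "skew_hom q n m g" and W: "W \<in> Vn m"
  shows "skew_hom q (Suc n) m (extend_hom n g W)"
  unfolding skew_hom_def
proof (intro conjI ballI allI)
  fix y :: "'a vec"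
  show "extend_hom n g W y \<in> Vn m"
    using skew_hom_mem_Vn[OF g trunc_vec_mem_Vn] W by (simp add: extend_hom_def mem_Vn_iff)
next
  fix x y :: "'a vec"
  have "g (trunc_vec n (vadd x y)) = vadd (g (trunc_vec n x)) (g (trunc_vec n y))"
    unfolding trunc_vec_vadd by (simp add: linear_on_add[OF linear_on_if_skew_hom[OF g]])
  then show "extend_hom n g W (vadd x y) = vadd (extend_hom n g W x) (extend_hom n g W y)"
    by (simp add: extend_hom_def fun_eq_iff skew_mult_add_left)
next
  fix r and x :: "'a vec"
  have "g (trunc_vec n (vsmult q r x)) = vsmult q r (g (trunc_vec n x))"
    unfolding trunc_vec_vsmult by (simp add: linear_on_smult[OF linear_on_if_skew_hom[OF g]])
  then show "extend_hom n g W (vsmult q r x) = vsmult q r (extend_hom n g W x)"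
    by (simp add: extend_hom_def fun_eq_iff skew_mult_add_right skew_mult_assoc)
qed

lemma extend_hom_Vn: "y \<in> Vn n \<Longrightarrow> extend_hom n g W y = g y"
  by (simp add: extend_hom_def trunc_vec_id mem_Vn_iff fun_eq_iff)

end

section \<open>Existence and uniqueness of the factorisation\<close>

locale hom_extension_step = frobenius_skew_ring ty q
  for ty :: "'a::alg_closed_field itself" and q :: nat +
  fixes M :: "'a vec set" and f h :: "'a vec \<Rightarrow> 'a vec" and n m :: nat and u :: "'a vec"
  assumes submodule: "is_submodule M"
    and f_linear: "linear_on M f" and h_linear: "linear_on M h"
    and f_range: "\<And>x. x \<in> M \<Longrightarrow> f x \<in> Vn (Suc n)"
    and h_range: "\<And>x. x \<in> M \<Longrightarrow> h x \<in> Vn m"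
    and u_mem: "u \<in> M" and generator_coeff_0: "coeff (f u n) 0 \<noteq> 0"
    and generator: "\<And>x. x \<in> M \<Longrightarrow> \<exists>r. f x n = r \<star> f u n"
    and ker: "\<And>x. x \<in> M \<Longrightarrow> f x \<in> submod q (Suc n) (sigma - 1) \<Longrightarrow>
      h x \<in> submod q m (sigma - 1)"
begin

definition ker_last :: "'a vec set" where
  "ker_last = {x \<in> M. f x n = 0}"

lemma ker_last_subset: "ker_last \<subseteq> M"
  by (auto simp: ker_last_def)

lemma submodule_ker_last: "is_submodule ker_last"
  unfolding is_submodule_def ker_last_def
  using submodule_zero[OF submodule] linear_on_zero[OF f_linear submodule]
  by (auto simp: submodule_add[OF submodule] submodule_smult[OF submodule]
      linear_on_add[OF f_linear] linear_on_smult[OF f_linear])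

lemma f_ker_last_mem_Vn:
  assumes "x \<in> ker_last"
  shows "f x \<in> Vn n"
  unfolding mem_Vn_iff
proof (intro allI impI)
  fix i assume "n \<le> i"
  then consider "i = n" | "Suc n \<le> i" by linarith
  then show "f x i = 0"
    using assms f_range[of x] by cases (auto simp: ker_last_def mem_Vn_iff)
qed

lemma split_off_generator:
  assumes x: "x \<in> M"
  obtains r x' where "x' \<in> ker_last" "x = vadd x' (vsmult q r u)" "f x n = r \<star> f u n"
proof -
  obtain r where r: "f x n = r \<star> f u n"
    using generator[OF x] by blast
  define x' where "x' = vdiff x (vsmult q r u)"
  have "x' \<in> M"
    unfolding x'_def using submodule u_mem x by (intro submodule_diff submodule_smult)
  moreover have "f x' n = 0"
    unfolding x'_def using submodule u_mem x r
    by (simp add: linear_on_diff[OF f_linear] linear_on_smult[OF f_linear] submodule_smult)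
  moreover have "x = vadd x' (vsmult q r u)"
    by (simp add: x'_def fun_eq_iff)
  ultimately show ?thesis
    using that r by (auto simp: ker_last_def)
qed

lemma f_split:
  "x' \<in> ker_last \<Longrightarrow> f (vadd x' (vsmult q r u)) = vadd (f x') (vsmult q r (f u))"
  using ker_last_subset u_mem
  by (auto simp: linear_on_add[OF f_linear] linear_on_smult[OF f_linear]
      submodule_smult[OF submodule])

lemma h_split:
  "x' \<in> ker_last \<Longrightarrow> h (vadd x' (vsmult q r u)) = vadd (h x') (vsmult q r (h u))"
  using ker_last_subset u_mem
  by (auto simp: linear_on_add[OF h_linear] linear_on_smult[OF h_linear]
      submodule_smult[OF submodule])

lemma split_mem: "x' \<in> ker_last \<Longrightarrow> vadd x' (vsmult q r u) \<in> M"
  using ker_last_subset u_mem submodule by (auto intro: submodule_add submodule_smult)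

lemma surj_mod_sigma_ker_last:
  assumes "surj_mod_on sigma M (Suc n) f"
  shows "surj_mod_on sigma ker_last n f"
  unfolding surj_mod_on_def
proof
  fix y :: "'a vec" assume y: "y \<in> Vn n"
  then have "y \<in> Vn (Suc n)" by (simp add: mem_Vn_iff)
  then obtain x where x: "x \<in> M" "vdiff y (f x) \<in> submod q (Suc n) sigma"
    using surj_mod_onD[OF assms] by blast
  then have coeff_0: "coeff (y j - f x j) 0 = 0" for j
    by (simp add: submod_sigma_iff)
  obtain r x' where x': "x' \<in> ker_last" "x = vadd x' (vsmult q r u)" "f x n = r \<star> f u n"
    using split_off_generator[OF x(1)] .
  have "coeff (f x n) 0 = 0"
    using coeff_0[of n] y by (simp add: mem_Vn_iff)
  then have "coeff r 0 = 0"
    using x'(3) generator_coeff_0 by (simp add: coeff_skew_mult_0)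
  then have "vdiff y (f x') \<in> submod q n sigma"
    using coeff_0 y f_ker_last_mem_Vn[OF x'(1)] f_split[OF x'(1), of r]
    by (auto simp: submod_sigma_iff mem_Vn_iff x'(2) coeff_skew_mult_0 algebra_simps)
  with x'(1) show "\<exists>x\<in>ker_last. vdiff y (f x) \<in> submod q n sigma" by blast
qed

lemma ker_sigma1_ker_last:
  "x \<in> ker_last \<Longrightarrow> f x \<in> submod q n (sigma - 1) \<Longrightarrow> h x \<in> submod q m (sigma - 1)"
  using ker ker_last_subset by (auto simp: submod_sigma1_iff mem_Vn_iff)

(* The last coordinate of f (c u) is c a; the other coordinates are corrected by an element of
   ker_last. *)
lemma lift_mod_sigma1:
  assumes surj: "surj_mod_on (sigma - 1) ker_last n f" and y: "y \<in> Vn (Suc n)"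
    and last: "eval1 (y n) = eval1 (smult c (f u n))"
  obtains x' where "x' \<in> ker_last"
    "vdiff y (f (vadd x' (vsmult q [:c:] u))) \<in> submod q (Suc n) (sigma - 1)"
proof -
  define y' where "y' = trunc_vec n (vdiff y (vsmult q [:c:] (f u)))"
  have "y' \<in> Vn n"
    by (simp add: y'_def)
  then obtain x' where x': "x' \<in> ker_last" "vdiff y' (f x') \<in> submod q n (sigma - 1)"
    using surj_mod_onD[OF surj] by blast
  have x'_cong: "eval1 (y' j - f x' j) = 0" for j
    using x'(2) unfolding submod_sigma1_iff vdiff_apply by blast
  have "eval1 (y j - (f x' j + [:c:] \<star> f u j)) = 0" for j
  proof (cases "j < n")
    case True
    then show ?thesis using x'_cong[of j] by (simp add: y'_def trunc_vec_def algebra_simps)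
  next
    case False
    then consider "j = n" | "j > n" by linarith
    then show ?thesis
    proof cases
      case 1
      then show ?thesis
        using last f_ker_last_mem_Vn[OF x'(1)]
        by (simp add: mem_Vn_iff eval1_diff eval1_add const_skew_mult)
    next
      case 2
      then show ?thesis
        using y f_ker_last_mem_Vn[OF x'(1)] f_range[OF u_mem] by (simp add: mem_Vn_iff)
    qed
  qed
  moreover have "vdiff y (f (vadd x' (vsmult q [:c:] u))) \<in> Vn (Suc n)"
    using y f_ker_last_mem_Vn[OF x'(1)] f_range[OF u_mem]
    by (simp add: f_split[OF x'(1)] mem_Vn_iff)
  ultimately show ?thesis
    using that x'(1) by (simp add: submod_sigma1_iff f_split[OF x'(1)])
qed

lemma surj_mod_sigma1_lift:
  assumes "surj_mod_on (sigma - 1) ker_last n f"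
  shows "surj_mod_on (sigma - 1) M (Suc n) f"
  unfolding surj_mod_on_def
proof
  fix y :: "'a vec" assume y: "y \<in> Vn (Suc n)"
  have "f u n \<noteq> 0"
    using generator_coeff_0 by auto
  then obtain c where "poly (qpoly (f u n)) c = eval1 (y n)"
    using qpoly_surjective by blast
  then obtain x' where "x' \<in> ker_last"
    "vdiff y (f (vadd x' (vsmult q [:c:] u))) \<in> submod q (Suc n) (sigma - 1)"
    using lift_mod_sigma1[OF assms y] by (metis eval1_smult)
  with split_mem show "\<exists>x\<in>M. vdiff y (f x) \<in> submod q (Suc n) (sigma - 1)" by blast
qed

(* If c a is in (sigma - 1)R, then x = c u corrected inside ker_last has f x in
   (sigma - 1)R^(n+1), hence h x in (sigma - 1)R^m; comparing h x with g' applied to the truncation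
   of f x shows that c (h u - g' (f u)) is in (sigma - 1)R^m. *)
lemma correction_divisible:
  assumes g': "skew_hom q n m g'" and g'_f: "\<And>x. x \<in> ker_last \<Longrightarrow> g' (f x) = h x"
    and surj: "surj_mod_on (sigma - 1) ker_last n f"
  shows "\<exists>w. h u j - g' (trunc_vec n (f u)) j = f u n \<star> w"
proof (rule left_divisible_if_eval1_smult_eq_0[OF generator_coeff_0])
  fix c assume c: "eval1 (smult c (f u n)) = 0"
  obtain x' where x': "x' \<in> ker_last"
    "vdiff (\<lambda>_. 0) (f (vadd x' (vsmult q [:c:] u))) \<in> submod q (Suc n) (sigma - 1)"
    using lift_mod_sigma1[OF surj, of "\<lambda>_. 0" c] c by (auto simp: mem_Vn_iff)
  define x where "x = vadd x' (vsmult q [:c:] u)"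
  have fx: "f x \<in> submod q (Suc n) (sigma - 1)"
    using x'(2) by (auto simp: x_def submod_sigma1_iff eval1_diff mem_Vn_iff)
  then have hx: "eval1 (h x j) = 0"
    using ker[OF split_mem[OF x'(1)]] by (simp add: submod_sigma1_iff x_def)
  have "trunc_vec n (f x) \<in> submod q n (sigma - 1)"
    using fx by (auto simp: submod_sigma1_iff trunc_vec_def mem_Vn_iff)
  then have "g' (trunc_vec n (f x)) \<in> submod q m (sigma - 1)"
    by (rule skew_hom_submod[OF g'])
  then have g'x: "eval1 (g' (trunc_vec n (f x)) j) = 0"
    by (simp add: submod_sigma1_iff)
  have trunc_fx: "trunc_vec n (f x) = vadd (f x') (vsmult q [:c:] (trunc_vec n (f u)))"
    using trunc_vec_id[OF f_ker_last_mem_Vn[OF x'(1)]]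
    by (simp add: x_def f_split[OF x'(1)] trunc_vec_vadd trunc_vec_vsmult)
  have "g' (trunc_vec n (f x)) = vadd (g' (f x')) (vsmult q [:c:] (g' (trunc_vec n (f u))))"
    unfolding trunc_fx using f_ker_last_mem_Vn[OF x'(1)] linear_on_if_skew_hom[OF g']
    by (simp only: linear_on_add linear_on_smult submodule_smult[OF submodule_Vn] trunc_vec_mem_Vn)
  then have "g' (trunc_vec n (f x)) = vadd (h x') (vsmult q [:c:] (g' (trunc_vec n (f u))))"
    by (simp only: g'_f[OF x'(1)])
  moreover have "h x = vadd (h x') (vsmult q [:c:] (h u))"
    by (simp add: x_def h_split[OF x'(1)])
  ultimately have "smult c (h u j - g' (trunc_vec n (f u)) j) = h x j - g' (trunc_vec n (f x)) j"
    by (simp add: const_skew_mult smult_diff_right)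
  then show "eval1 (smult c (h u j - g' (trunc_vec n (f u)) j)) = 0"
    using hx g'x by (simp add: eval1_diff)
qed

lemma extension_exists:
  assumes g': "skew_hom q n m g'" and g'_f: "\<And>x. x \<in> ker_last \<Longrightarrow> g' (f x) = h x"
    and surj: "surj_mod_on (sigma - 1) ker_last n f"
  shows "\<exists>g. skew_hom q (Suc n) m g \<and> (\<forall>x\<in>M. g (f x) = h x)"
proof -
  obtain W where W: "\<And>j. h u j - g' (trunc_vec n (f u)) j = f u n \<star> W j"
    using correction_divisible[OF assms] by metis
  have "f u n \<star> W j = 0" if "j \<ge> m" for j
    using that W[of j] h_range[OF u_mem] skew_hom_mem_Vn[OF g' trunc_vec_mem_Vn]
    by (simp add: mem_Vn_iff)
  moreover have "f u n \<noteq> 0"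
    using generator_coeff_0 by auto
  ultimately have "W \<in> Vn m"
    by (simp add: mem_Vn_iff)
  define g where "g = extend_hom n g' W"
  have g: "skew_hom q (Suc n) m g"
    unfolding g_def by (rule skew_hom_extend_hom[OF g' \<open>W \<in> Vn m\<close>])
  have "g (f x) = h x" if x: "x \<in> M" for x
  proof -
    obtain r x' where x': "x' \<in> ker_last" "x = vadd x' (vsmult q r u)"
      using split_off_generator[OF x] by blast
    have "g (f x') = h x'"
      using f_ker_last_mem_Vn[OF x'(1)] g'_f[OF x'(1)] by (simp add: g_def extend_hom_Vn)
    moreover have "g (f u) = h u"
      using W by (simp add: g_def extend_hom_def fun_eq_iff algebra_simps)
    moreover have "g (f x) = vadd (g (f x')) (vsmult q r (g (f u)))"
      using f_range[OF u_mem] f_range[OF subsetD[OF ker_last_subset x'(1)]]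
        linear_on_if_skew_hom[OF g]
      by (simp add: x'(2) f_split[OF x'(1)] linear_on_add linear_on_smult
          submodule_smult[OF submodule_Vn] fun_eq_iff)
    ultimately show ?thesis
      by (simp add: x'(2) h_split[OF x'(1)])
  qed
  with g show ?thesis by blast
qed

end

context frobenius_skew_ring
begin

lemma hom_extension_0:
  assumes M: "is_submodule M" and h: "linear_on M h"
    and f: "\<And>x. x \<in> M \<Longrightarrow> f x \<in> Vn 0"
    and ker: "\<And>x. x \<in> M \<Longrightarrow> f x \<in> submod q 0 (sigma - 1) \<Longrightarrow>
      h x \<in> submod q m (sigma - 1)"
  shows "(\<exists>g. skew_hom q 0 m g \<and> (\<forall>x\<in>M. g (f x) = h x)) \<and> surj_mod_on (sigma - 1) M 0 f"
proof -
  have f_0: "f x = (\<lambda>_. 0)" if "x \<in> M" for x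
    using f[OF that] by (simp add: mem_Vn_iff fun_eq_iff)
  have h_mod: "h x \<in> submod q m (sigma - 1)" if "x \<in> M" for x
    using ker[OF that] f_0[OF that] by (simp add: submod_sigma1_iff mem_Vn_iff)
  have h_0: "h x = (\<lambda>_. 0)" if x: "x \<in> M" for x
  proof
    fix j
    show "h x j = 0"
    proof (rule eq_0_if_eval1_smult_eq_0)
      fix c
      have "h (vsmult q [:c:] x) \<in> submod q m (sigma - 1)"
        using h_mod submodule_smult[OF M x] by blast
      then show "eval1 (smult c (h x j)) = 0"
        by (simp add: linear_on_smult[OF h x] submod_sigma1_iff const_skew_mult)
    qed
  qed
  have "skew_hom q 0 m (\<lambda>_::'a vec. \<lambda>_. 0)"
    by (simp add: skew_hom_def mem_Vn_iff fun_eq_iff)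
  moreover have "surj_mod_on (sigma - 1) M 0 f"
    unfolding surj_mod_on_def
    using submodule_zero[OF M] f_0 by (auto simp: submod_sigma1_iff mem_Vn_iff)
  ultimately show ?thesis
    using h_0 f_0 by auto
qed

lemma hom_extension:
  assumes M: "is_submodule M" and f: "linear_on M f" and h: "linear_on M h"
    and f_range: "\<And>x. x \<in> M \<Longrightarrow> f x \<in> Vn n" and h_range: "\<And>x. x \<in> M \<Longrightarrow> h x \<in> Vn m"
    and surj: "surj_mod_on sigma M n f"
    and ker: "\<And>x. x \<in> M \<Longrightarrow> f x \<in> submod q n (sigma - 1) \<Longrightarrow>
      h x \<in> submod q m (sigma - 1)"
  shows "(\<exists>g. skew_hom q n m g \<and> (\<forall>x\<in>M. g (f x) = h x)) \<and> surj_mod_on (sigma - 1) M n f"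
  using assms
proof (induction n arbitrary: M f h)
  case 0
  then show ?case by (intro hom_extension_0) auto
next
  case (Suc n)
  obtain u where u: "u \<in> M" "coeff (f u n) 0 \<noteq> 0" "\<And>x. x \<in> M \<Longrightarrow> \<exists>r. f x n = r \<star> f u n"
    using last_coordinate_generator[OF Suc.prems(1,2,6)] by blast
  interpret step: hom_extension_step ty q M f h n m u
    by (intro hom_extension_step.intro hom_extension_step_axioms.intro frobenius_skew_ring_axioms)
      (use Suc.prems u in auto)
  have "(\<exists>g'. skew_hom q n m g' \<and> (\<forall>x\<in>step.ker_last. g' (f x) = h x)) \<and>
      surj_mod_on (sigma - 1) step.ker_last n f"
    using step.ker_last_subset Suc.prems(5)
    by (intro Suc.IH step.submodule_ker_last step.f_ker_last_mem_Vn step.ker_sigma1_ker_last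
        linear_on_subset[OF Suc.prems(2)] linear_on_subset[OF Suc.prems(3)]
        step.surj_mod_sigma_ker_last[OF Suc.prems(6)]) auto
  then show ?case
    using step.extension_exists step.surj_mod_sigma1_lift by blast
qed

lemma sigma_divisible_set_trivial:
  assumes divisible: "\<And>r. r \<in> S \<Longrightarrow> \<exists>s\<in>S. r = sigma \<star> s" and r: "r \<in> S"
  shows "r = 0"
proof -
  have "\<forall>r\<in>S. coeff r i = 0" for i
    by (induction i) (force simp: coeff_sigma_skew_mult dest: divisible)+
  with r show ?thesis by (auto intro: poly_eqI)
qed

lemma hom_unique:
  assumes g: "skew_hom q n m g" and g': "skew_hom q n m g'"
    and f: "\<And>x. x \<in> M \<Longrightarrow> f x \<in> Vn n" and agree: "\<And>x. x \<in> M \<Longrightarrow> g' (f x) = g (f x)"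
    and surj: "surj_mod_on sigma M n f" and y: "y \<in> Vn n"
  shows "g' y = g y"
proof -
  define S where "S = {g' y j - g y j | y j. y \<in> Vn n}"
  have "\<exists>s\<in>S. r = sigma \<star> s" if "r \<in> S" for r
  proof -
    obtain y j where y: "y \<in> Vn n" and r: "r = g' y j - g y j"
      using \<open>r \<in> S\<close> by (auto simp: S_def)
    obtain x where x: "x \<in> M" "vdiff y (f x) \<in> submod q n sigma"
      using surj_mod_onD[OF surj y] by blast
    then obtain y' where y': "y' \<in> Vn n" "vdiff y (f x) = vsmult q sigma y'"
      by (auto simp: submod_def)
    have y_eq: "y = vadd (f x) (vsmult q sigma y')"
      using y'(2) by (simp add: fun_eq_iff algebra_simps)
    have "G y = vadd (G (f x)) (vsmult q sigma (G y'))" if "skew_hom q n m G" for G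
      using linear_on_if_skew_hom[OF that] f[OF x(1)] y'(1)
      by (subst (1) y_eq)
        (simp only: linear_on_add linear_on_smult submodule_smult[OF submodule_Vn])
    then have "r = sigma \<star> (g' y' j - g y' j)"
      using g g' agree[OF x(1)] by (simp add: r skew_mult_diff_right)
    with y' show ?thesis by (auto simp: S_def)
  qed
  then have "g' y j - g y j = 0" for j
    by (rule sigma_divisible_set_trivial) (use y in \<open>auto simp: S_def\<close>)
  then show ?thesis
    by (simp add: fun_eq_iff)
qed

end

section \<open>Finite fields and the algebraic closure of \<open>F\<^sub>q(T)\<close>\<close>

lemma of_nat_fract_eq_0_iff: "(of_nat k :: 'a::idom fract) = 0 \<longleftrightarrow> (of_nat k :: 'a) = 0"
  by (simp add: of_nat_fract Zero_fract_def eq_fract)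

lemma CHAR_fract [simp]: "CHAR('a::idom fract) = CHAR('a)"
  by (rule CHAR_eqI) (simp_all add: of_nat_fract_eq_0_iff of_nat_eq_0_iff_char_dvd)

lemma power_card_eq_self:
  fixes x :: "'f::{field,finite}"
  shows "x ^ card (UNIV :: 'f set) = x"
proof (cases "x = 0")
  case False
  define R where "R = (ring_of_type_algebra :: 'f ring)"
  interpret R: field R
    unfolding R_def by (rule field_from_type_algebra)
  have units: "Units R = UNIV - {0}"
    using R.field_Units by (simp add: R_def ring_of_type_algebra_def)
  have pow: "y [^]\<^bsub>R\<^esub> k = y ^ k" for y :: 'f and k :: nat
    by (induction k) (simp_all add: R_def ring_of_type_algebra_def)
  have "x [^]\<^bsub>units_of R\<^esub> Coset.order (units_of R) = \<one>\<^bsub>units_of R\<^esub>"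
    by (rule group.pow_order_eq_1[OF R.units_group]) (simp add: units_of_carrier units False)
  moreover have "Coset.order (units_of R) = card (UNIV :: 'f set) - 1"
    by (simp add: Coset.order_def units_of_carrier units card_Diff_singleton)
  moreover have "\<one>\<^bsub>R\<^esub> = 1"
    by (simp add: R_def ring_of_type_algebra_def)
  ultimately have "x [^]\<^bsub>R\<^esub> (card (UNIV :: 'f set) - 1) = 1"
    using False by (simp add: R.units_of_pow units units_of_one)
  then have x_power: "x ^ (card (UNIV :: 'f set) - 1) = 1"
    by (simp add: pow)
  have "x ^ card (UNIV :: 'f set) = x ^ Suc (card (UNIV :: 'f set) - 1)"
    using finite_UNIV_card_ge_0[where 'a = 'f] by simp
  also have "\<dots> = x"
    by (simp only: power_Suc2 x_power mult_1_left)
  finally show ?thesis .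
qed (simp add: finite_UNIV_card_ge_0 zero_power)

(* With p = CHAR('f), the additive injection x \<mapsto> x ^ (p ^ a) is onto, so u = v ^ (p ^ a)
   and (1 + u) ^ m = (1 + v) ^ card UNIV = 1 + v = 1 + u ^ m. *)
lemma one_plus_power_additive:
  fixes u :: "'f::{field,finite}"
  assumes card: "card (UNIV :: 'f set) = CHAR('f) ^ a * m"
  shows "(1 + u) ^ m = 1 + u ^ m"
proof -
  define F where "F x = x ^ (CHAR('f) ^ a)" for x :: 'f
  have F_add: "F (x + y) = F x + F y" for x y
    unfolding F_def
    by (rule freshmans_dream') (simp_all add: finite_imp_CHAR_pos prime_CHAR_semidom)
  have "inj F"
  proof (rule injI)
    fix x y assume "F x = F y"
    then have "F (x - y) = 0"
      using F_add[of "x - y" y] by simp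
    then show "x = y"
      by (simp add: F_def)
  qed
  then obtain v where v: "u = F v"
    using finite_UNIV_inj_surj[of F] by (metis finite surjD)
  have "(1 + u) ^ m = F (1 + v) ^ m"
    using F_add[of 1 v] by (simp add: v F_def)
  also have "\<dots> = (1 + v) ^ card (UNIV :: 'f set)"
    by (simp add: F_def card power_mult)
  also have "\<dots> = 1 + v ^ card (UNIV :: 'f set)"
    by (simp only: power_card_eq_self)
  also have "\<dots> = 1 + u ^ m"
    by (simp add: v F_def card power_mult)
  finally show ?thesis .
qed

lemma card_lt_if_one_plus_power_additive:
  fixes m :: nat
  assumes additive: "\<And>u::'f::{field,finite}. (1 + u) ^ m = 1 + u ^ m"
    and m: "m \<ge> 2" "of_nat m \<noteq> (0::'f)"
  shows "card (UNIV :: 'f set) < m"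
proof -
  define P :: "'f poly" where "P = [:1, 1:] ^ m - 1 - monom 1 m"
  have "coeff P 1 = of_nat m"
    using m(1) by (simp add: P_def coeff_linear_poly_power coeff_monom)
  then have "P \<noteq> 0"
    using m(2) by auto
  have "degree P < m"
  proof -
    have "degree ([:1, 1:] ^ m :: 'f poly) \<le> m"
      using degree_power_le[of "[:1, 1:] :: 'f poly" m] by simp
    then have "coeff P i = 0" if "i \<ge> m" for i
      using that m(1)
      by (cases "i = m") (auto simp: P_def coeff_linear_power coeff_monom coeff_eq_0)
    then show ?thesis
      using m(1) \<open>P \<noteq> 0\<close> by (metis leading_coeff_0_iff not_less)
  qed
  have "{u. poly P u = 0} = UNIV"
    using additive by (auto simp: P_def poly_monom)
  then have "card (UNIV :: 'f set) \<le> degree P"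
    using card_poly_roots_bound[OF \<open>P \<noteq> 0\<close>] by simp
  with \<open>degree P < m\<close> show ?thesis by simp
qed

lemma card_UNIV_eq_CHAR_power: "\<exists>k>0. card (UNIV :: 'f::{field,finite} set) = CHAR('f) ^ k"
proof -
  define p where "p = CHAR('f)"
  define Q where "Q = card (UNIV :: 'f set)"
  have p: "prime p"
    unfolding p_def by (simp add: finite_imp_CHAR_pos prime_CHAR_semidom)
  have "Q \<ge> 2"
    using card_mono[of UNIV "{0, 1 :: 'f}"] by (simp add: Q_def)
  obtain m where Q_eq: "Q = p ^ multiplicity p Q * m" and "\<not> p dvd m"
    using multiplicity_decompose'[of Q p] p \<open>Q \<ge> 2\<close>
    by (metis not_prime_unit not_numeral_le_zero)
  define a where "a = multiplicity p Q"
  have Q_split: "Q = p ^ a * m"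
    using Q_eq by (simp only: a_def)
  have additive: "(1 + u) ^ m = 1 + u ^ m" for u :: 'f
    by (rule one_plus_power_additive[of a]) (use Q_split in \<open>simp add: Q_def p_def\<close>)
  have "m = 1"
  proof (rule ccontr)
    assume "m \<noteq> 1"
    moreover have "m \<noteq> 0"
      using Q_split \<open>Q \<ge> 2\<close> by (cases "m = 0") auto
    moreover have "of_nat m \<noteq> (0::'f)"
      using \<open>\<not> p dvd m\<close> by (simp add: of_nat_eq_0_iff_char_dvd p_def)
    ultimately have "Q < m"
      using card_lt_if_one_plus_power_additive[OF additive] by (simp add: Q_def)
    moreover have "m \<le> Q"
      using Q_split prime_gt_0_nat[OF p] by simp
    ultimately show False by simp
  qed
  then show ?thesis
    using Q_split \<open>Q \<ge> 2\<close> by (intro exI[of _ a]) (auto simp: Q_def p_def intro: Nat.gr0I)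
qed

lemma frobenius_skew_ring_kbar:
  "frobenius_skew_ring TYPE('f kbar) (card (UNIV :: 'f::{field,finite} set))"
proof
  show "CHAR('f kbar) > 0"
    by (simp add: finite_imp_CHAR_pos)
  show "\<exists>k>0. card (UNIV :: 'f set) = CHAR('f kbar) ^ k"
    using card_UNIV_eq_CHAR_power by simp
qed

theorem lemma4:
  fixes f1 f2 :: "(nat \<Rightarrow> ('f::{field,finite}) kbar poly) \<Rightarrow> (nat \<Rightarrow> 'f kbar poly)"
    and n :: nat
  assumes hom1: "skew_hom (card (UNIV :: 'f set)) n n f1"
    and hom2: "skew_hom (card (UNIV :: 'f set)) n n f2"
    and bij1: "mod_bij (card (UNIV :: 'f set)) n n sigma f1"
    and ker: "mod_ker_sub (card (UNIV :: 'f set)) n n n (sigma - 1) f1 f2"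
  shows "\<exists>g. skew_hom (card (UNIV :: 'f set)) n n g \<and> (\<forall>x\<in>Vn n. g (f1 x) = f2 x) \<and>
           (\<forall>g'. skew_hom (card (UNIV :: 'f set)) n n g' \<and> (\<forall>x\<in>Vn n. g' (f1 x) = f2 x) \<longrightarrow>
                  (\<forall>y\<in>Vn n. g' y = g y))"
proof -
  interpret frobenius_skew_ring "TYPE('f kbar)" "card (UNIV :: 'f set)"
    by (rule frobenius_skew_ring_kbar)
  have surj: "surj_mod_on sigma (Vn n) n f1"
    using bij1 by (simp add: mod_bij_def surj_mod_on_def)
  obtain g where g: "skew_hom (card (UNIV :: 'f set)) n n g" "\<forall>x\<in>Vn n. g (f1 x) = f2 x"
    using hom_extension[OF submodule_Vn linear_on_if_skew_hom[OF hom1]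
        linear_on_if_skew_hom[OF hom2] skew_hom_mem_Vn[OF hom1] skew_hom_mem_Vn[OF hom2] surj] ker
    by (auto simp: mod_ker_sub_def)
  moreover have "g' y = g y"
    if "skew_hom (card (UNIV :: 'f set)) n n g'" "\<forall>x\<in>Vn n. g' (f1 x) = f2 x" "y \<in> Vn n"
    for g' y
    using hom_unique[OF g(1) that(1) skew_hom_mem_Vn[OF hom1] _ surj that(3)] that(2) g(2)
    by simp
  ultimately show ?thesis by blast
qed

end
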